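(* Consider the planar system $$\frac{dC}{dt} = 1 + m_1\frac{CL}{1+L} - m_2\frac{CL}{1+m_3C} - m_4C,\qquad \frac{dL}{dt} = L - m_5 CL,$$ with positive parameters $m_1,\dots,m_5$. Let $$a=-\frac{m_2}{1+m_3/m_5},\quad b=m_1+m_5-m_4-\frac{m_2}{1+m_3/m_5},\quad c=m_5-m_4,\quad \Delta=b^2-4ac,$$ and, assuming $\Delta\ge 0$ (so that the equilibria $E_2=(1/m_5,L_2)$ and $E_3=(1/m_5,L_3)$ exist), let $L_2=\frac{-b-\sqrt{\Delta}}{2a}$ and $L_3=\frac{-b+\sqrt{\Delta}}{2a}$. Then: 1. $L_2\ge 0$ if and only if $m_5\ge m_4$ or $m_2\le (1+m_3/m_5)(m_1+m_5-m_4)$. 2. $L_3\ge 0$ if and only if $m_2\le (1+m_3/m_5)(m_1+m_5-m_4)$ and $m_5\le m_4$.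
   Context: Nondimensional model of CAR-T cells $C$ and lymphoma cells $L$; $E_2,E_3$ are the coexistence equilibria with $C=1/m_5$, and $L_2,L_3$ are the roots of $aL^2+bL+c=0$. *)

theory Defs
  imports Complex_Main
begin

end

theory Submission
  imports Defs
begin

text \<open>Since \<open>a < 0\<close>, \<open>L\<^sub>2 = (b + \<surd>\<Delta>)/(-2a)\<close> and \<open>L\<^sub>3 = (b - \<surd>\<Delta>)/(-2a)\<close> are the larger
  and smaller root of \<open>a L\<^sup>2 + b L + c\<close>. Comparing \<open>|b|\<close> with \<open>\<surd>(b\<^sup>2 - 4ac)\<close> shows that the
  larger root is nonnegative iff \<open>b \<ge> 0\<close> or \<open>c \<ge> 0\<close>, and the smaller one iff \<open>b \<ge> 0\<close> and
  \<open>c \<le> 0\<close>. Multiplying \<open>b\<close> by \<open>1 + m\<^sub>3/m\<^sub>5 > 0\<close> turns \<open>b \<ge> 0\<close> into the condition on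
  \<open>m\<^sub>2\<close>.\<close>

lemma add_sqrt_discriminant_nonneg_iff:
  fixes b e :: real
  assumes "e \<le> b\<^sup>2"
  shows "0 \<le> b + sqrt (b\<^sup>2 - e) \<longleftrightarrow> 0 \<le> b \<or> e \<le> 0"
proof (cases "0 \<le> b")
  case True
  then show ?thesis
    using assms by simp
next
  case False
  then have "0 \<le> b + sqrt (b\<^sup>2 - e) \<longleftrightarrow> sqrt ((- b)\<^sup>2) \<le> sqrt (b\<^sup>2 - e)"
    by (simp add: real_sqrt_abs) linarith
  also have "\<dots> \<longleftrightarrow> e \<le> 0"
    by (subst real_sqrt_le_iff) simp
  finally show ?thesis
    using False by simp
qed

lemma diff_sqrt_discriminant_nonneg_iff:
  fixes b e :: real
  assumes "e \<le> b\<^sup>2"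
  shows "0 \<le> b - sqrt (b\<^sup>2 - e) \<longleftrightarrow> 0 \<le> b \<and> 0 \<le> e"
proof (cases "0 \<le> b")
  case True
  then have "0 \<le> b - sqrt (b\<^sup>2 - e) \<longleftrightarrow> sqrt (b\<^sup>2 - e) \<le> sqrt (b\<^sup>2)"
    by simp
  also have "\<dots> \<longleftrightarrow> 0 \<le> e"
    by (subst real_sqrt_le_iff) simp
  finally show ?thesis
    using True by simp
next
  case False
  moreover have "0 \<le> sqrt (b\<^sup>2 - e)"
    using assms by simp
  ultimately show ?thesis
    by linarith
qed

lemma quadratic_larger_root_nonneg_iff:
  fixes a b c :: real
  assumes "a < 0" and "0 \<le> b\<^sup>2 - 4 * a * c"
  shows "0 \<le> (- b - sqrt (b\<^sup>2 - 4 * a * c)) / (2 * a) \<longleftrightarrow> 0 \<le> b \<or> 0 \<le> c"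
proof -
  have "0 \<le> (- b - sqrt (b\<^sup>2 - 4 * a * c)) / (2 * a) \<longleftrightarrow> 0 \<le> b + sqrt (b\<^sup>2 - 4 * a * c)"
    using assms(1) by (simp add: zero_le_divide_iff) linarith
  also have "\<dots> \<longleftrightarrow> 0 \<le> b \<or> 4 * a * c \<le> 0"
    using assms(2) by (intro add_sqrt_discriminant_nonneg_iff) simp
  finally show ?thesis
    using assms(1) by (simp add: mult_le_0_iff)
qed

lemma quadratic_smaller_root_nonneg_iff:
  fixes a b c :: real
  assumes "a < 0" and "0 \<le> b\<^sup>2 - 4 * a * c"
  shows "0 \<le> (- b + sqrt (b\<^sup>2 - 4 * a * c)) / (2 * a) \<longleftrightarrow> 0 \<le> b \<and> c \<le> 0"
proof -
  have "0 \<le> (- b + sqrt (b\<^sup>2 - 4 * a * c)) / (2 * a) \<longleftrightarrow> 0 \<le> b - sqrt (b\<^sup>2 - 4 * a * c)"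
    using assms(1) by (simp add: zero_le_divide_iff)
  also have "\<dots> \<longleftrightarrow> 0 \<le> b \<and> 0 \<le> 4 * a * c"
    using assms(2) by (intro diff_sqrt_discriminant_nonneg_iff) simp
  finally show ?thesis
    using assms(1) by (simp add: zero_le_mult_iff)
qed

theorem proposition4:
  fixes m1 m2 m3 m4 m5 a b c \<Delta> L2 L3 :: real
  assumes "m1 > 0" "m2 > 0" "m3 > 0" "m4 > 0" "m5 > 0"
    and "a = - m2 / (1 + m3 / m5)"
    and "b = m1 + m5 - m4 - m2 / (1 + m3 / m5)"
    and "c = m5 - m4"
    and "\<Delta> = b^2 - 4 * a * c"
    and "\<Delta> \<ge> 0"
    and "L2 = (- b - sqrt \<Delta>) / (2 * a)"
    and "L3 = (- b + sqrt \<Delta>) / (2 * a)"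
  shows "(L2 \<ge> 0 \<longleftrightarrow> (m5 \<ge> m4 \<or> m2 \<le> (1 + m3 / m5) * (m1 + m5 - m4)))
       \<and> (L3 \<ge> 0 \<longleftrightarrow> (m2 \<le> (1 + m3 / m5) * (m1 + m5 - m4) \<and> m5 \<le> m4))"
proof -
  define k where "k = 1 + m3 / m5"
  have "0 < k"
    using \<open>m3 > 0\<close> \<open>m5 > 0\<close> by (simp add: k_def add_pos_pos)
  then have "a < 0"
    using \<open>m2 > 0\<close> assms(6) by (simp add: k_def)
  have "b = m1 + m5 - m4 - m2 / k"
    using assms(7) by (simp add: k_def)
  then have "b * k = k * (m1 + m5 - m4) - m2"
    using \<open>0 < k\<close> by (simp add: field_simps)
  then have "0 \<le> b * k \<longleftrightarrow> m2 \<le> k * (m1 + m5 - m4)"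
    by linarith
  then have b_nonneg_iff: "0 \<le> b \<longleftrightarrow> m2 \<le> k * (m1 + m5 - m4)"
    using \<open>0 < k\<close> by (simp add: zero_le_mult_iff)
  show ?thesis
    using quadratic_larger_root_nonneg_iff[OF \<open>a < 0\<close>] quadratic_smaller_root_nonneg_iff[OF \<open>a < 0\<close>]
      assms(8-12) b_nonneg_iff
    by (auto simp: k_def)
qed

end
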